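(* Let $N\in\mathbb{N}$, let $\mathcal{T}$ be an $N$-regular rooted tree, let $\mathcal{S}\subset\mathcal{T}$ be a subtree, and let $1\le m\le N$ be an integer. Suppose that for every $m$-regular subtree $\mathcal{R}$ of $\mathcal{T}$, the set $\mathcal{S}\cap\mathcal{R}$ is infinite. Then $\mathcal{S}$ has an $(N-m+1)$-regular subtree.
   Context: A rooted tree is a connected graph without cycles with a distinguished vertex (the root), identified with its vertex set. The height of a vertex is the length of the unique path from the root to it. A successor of a vertex $\tau'$ is a vertex adjacent to $\tau'$ of height one greater. A subtree of $\mathcal{T}$ means a subset of vertices that contains the root of $\mathcal{T}$ and is closed under taking predecessors (so it is a rooted tree with the same root). A rooted tree is $N$-regular if every vertex has exactly $N$ successors. *)

theory Defs
  imports Main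
begin

text \<open>The N-regular rooted tree is modelled canonically: vertices are finite words over
  the alphabet {0..<N}, the root is the empty word, and the successors of a word v
  are the words v @ [i] with i < N.\<close>

definition full_tree :: "nat \<Rightarrow> nat list set" where
  "full_tree N = {xs. \<forall>x\<in>set xs. x < N}"

definition is_subtree :: "nat list set \<Rightarrow> nat list set \<Rightarrow> bool" where
  "is_subtree S T \<longleftrightarrow> S \<subseteq> T \<and> [] \<in> S \<and> (\<forall>xs\<in>S. butlast xs \<in> S)"

definition successors :: "nat list set \<Rightarrow> nat list \<Rightarrow> nat list set" where
  "successors R v = {w \<in> R. \<exists>i. w = v @ [i]}"

definition regular :: "nat \<Rightarrow> nat list set \<Rightarrow> bool" where
  "regular k R \<longleftrightarrow> (\<forall>v\<in>R. finite (successors R v) \<and> card (successors R v) = k)"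

end

theory Submission
  imports Defs
begin

(* Call a vertex bad at level 0 if it lies outside S, and bad at level n+1 if
   it is bad at level n or at least m of its N children are bad at level n.  Level-n badness
   of v means there is an m-branching tree above v all of whose branches leave S within
   n steps.
   - If the root is bad at some level r, descending along children of strictly smaller
     rank (and arbitrarily once S has been left) gives an m-regular subtree R of the full
     tree with S \<inter> R inside the words of length \<le> r; so S \<inter> R is finite, contradicting
     the hypothesis.
   - Otherwise, the never-bad vertices lie in S, contain the root, and every such vertex has
     fewer than m children that are eventually bad, hence at least N - m + 1 never-bad
     children; they therefore contain an (N - m + 1)-regular subtree of S.
   Both cases use one construction, the branching lemma: if a predicate holds at the root
   and every vertex satisfying it has at least k children satisfying it, then it holds on
   some k-regular subtree of the full tree.  That tree is generated by choosing k such
   children at every vertex. *)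

inductive_set gen_tree :: "(nat list \<Rightarrow> nat set) \<Rightarrow> nat list set" for c where
  Nil: "[] \<in> gen_tree c"
| snoc: "xs \<in> gen_tree c \<Longrightarrow> i \<in> c xs \<Longrightarrow> xs @ [i] \<in> gen_tree c"

lemma gen_tree_snoc_iff: "xs @ [i] \<in> gen_tree c \<longleftrightarrow> xs \<in> gen_tree c \<and> i \<in> c xs"
  by (auto elim: gen_tree.cases intro: gen_tree.intros)

lemma gen_tree_butlast: "xs \<in> gen_tree c \<Longrightarrow> butlast xs \<in> gen_tree c"
  by (cases xs rule: rev_cases) (auto simp: gen_tree_snoc_iff)

lemma successors_gen_tree:
  "v \<in> gen_tree c \<Longrightarrow> successors (gen_tree c) v = (\<lambda>i. v @ [i]) ` c v"
  by (auto simp: successors_def gen_tree_snoc_iff)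

lemma regular_gen_tree:
  assumes "\<And>v. v \<in> gen_tree c \<Longrightarrow> finite (c v) \<and> card (c v) = k"
  shows "regular k (gen_tree c)"
  unfolding regular_def
proof
  fix v assume v: "v \<in> gen_tree c"
  have "inj_on (\<lambda>i. v @ [i]) (c v)" by (rule inj_onI) simp
  then show "finite (successors (gen_tree c) v) \<and> card (successors (gen_tree c) v) = k"
    using assms[OF v] successors_gen_tree[OF v] by (simp add: card_image)
qed

lemma subtree_full_gen_tree:
  assumes "\<And>v. c v \<subseteq> {..<N}"
  shows "is_subtree (gen_tree c) (full_tree N)"
proof -
  have "xs \<in> full_tree N" if "xs \<in> gen_tree c" for xs
    using that by induction (use assms in \<open>auto simp: full_tree_def\<close>)
  then show ?thesis
    unfolding is_subtree_def using gen_tree_butlast gen_tree.Nil by blast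
qed

lemma branching_subtree:
  assumes root: "P []"
    and branch: "\<And>v. P v \<Longrightarrow> k \<le> card {i. i < N \<and> P (v @ [i])}"
  shows "\<exists>R. is_subtree R (full_tree N) \<and> regular k R \<and> (\<forall>v\<in>R. P v)"
proof -
  define good_children where "good_children v = {i. i < N \<and> P (v @ [i])}" for v
  define c where "c v = (if P v then SOME C. C \<subseteq> good_children v \<and> card C = k else {})" for v
  have c_good: "c v \<subseteq> good_children v \<and> card (c v) = k" if "P v" for v
  proof -
    have "k \<le> card (good_children v)"
      using branch[OF that] unfolding good_children_def .
    then obtain C where "C \<subseteq> good_children v" "card C = k"
      by (rule obtain_subset_with_card_n)
    then have "\<exists>C. C \<subseteq> good_children v \<and> card C = k" by blast
    then have "(SOME C. C \<subseteq> good_children v \<and> card C = k) \<subseteq> good_children v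
        \<and> card (SOME C. C \<subseteq> good_children v \<and> card C = k) = k"
      by (rule someI_ex)
    then show ?thesis unfolding c_def using that by simp
  qed
  have P_tree: "P v" if "v \<in> gen_tree c" for v
    using that
  proof induction
    case Nil show ?case by (rule root)
  next
    case (snoc xs i)
    then have "i \<in> good_children xs" using c_good by blast
    then show ?case unfolding good_children_def by simp
  qed
  have c_bounded: "c v \<subseteq> {..<N}" for v
  proof (cases "P v")
    case True
    then have "c v \<subseteq> good_children v" using c_good by blast
    then show ?thesis unfolding good_children_def by auto
  next
    case False
    then show ?thesis unfolding c_def by simp
  qed
  have "finite (c v)" for v
    using c_bounded by (rule finite_subset) simp
  then have "regular k (gen_tree c)"
    using c_good P_tree by (intro regular_gen_tree) simp
  moreover have "\<forall>v\<in>gen_tree c. P v" using P_tree by blast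
  ultimately show ?thesis
    using subtree_full_gen_tree[OF c_bounded] by (intro exI[of _ "gen_tree c"]) simp
qed

fun bad :: "nat list set \<Rightarrow> nat \<Rightarrow> nat \<Rightarrow> nat \<Rightarrow> nat list set" where
  "bad S N m 0 = - S"
| "bad S N m (Suc n) = bad S N m n \<union> {v. m \<le> card {i. i < N \<and> v @ [i] \<in> bad S N m n}}"

lemma bad_mono: "n \<le> n' \<Longrightarrow> bad S N m n \<subseteq> bad S N m n'"
  by (rule lift_Suc_mono_le[of "bad S N m"]) auto

definition rank :: "nat list set \<Rightarrow> nat \<Rightarrow> nat \<Rightarrow> nat list \<Rightarrow> nat" where
  "rank S N m v = (LEAST n. v \<in> bad S N m n)"

lemma bad_rank: "v \<in> bad S N m n \<Longrightarrow> v \<in> bad S N m (rank S N m v)"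
  unfolding rank_def by (rule LeastI)

lemma rank_le: "v \<in> bad S N m n \<Longrightarrow> rank S N m v \<le> n"
  unfolding rank_def by (rule Least_le)

lemma bad_vertex_in_S:
  assumes "v \<in> S" and "v \<in> bad S N m n"
  shows "0 < rank S N m v \<and> m \<le> card {i. i < N \<and> v @ [i] \<in> bad S N m (rank S N m v - 1)}"
proof -
  have at_rank: "v \<in> bad S N m (rank S N m v)" using assms(2) by (rule bad_rank)
  have "v \<notin> bad S N m 0" using assms(1) by simp
  then have "rank S N m v \<noteq> 0" using at_rank by metis
  then obtain p where p: "rank S N m v = Suc p" using not0_implies_Suc by blast
  have "v \<notin> bad S N m p"
    using p rank_le[of v S N m p] by (metis Suc_n_not_le_n)
  with at_rank p show ?thesis by simp
qed

text \<open>The children of a vertex that are bad at some level are all bad at one common level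
  (the sum of their ranks bounds each rank).\<close>

lemma common_bad_level:
  "\<exists>n0. \<forall>i<N. (\<exists>n. v @ [i] \<in> bad S N m n) \<longrightarrow> v @ [i] \<in> bad S N m n0"
proof (intro exI allI impI)
  fix i assume "i < N" and "\<exists>n. v @ [i] \<in> bad S N m n"
  then obtain n where n: "v @ [i] \<in> bad S N m n" by blast
  have "rank S N m (v @ [i]) \<le> (\<Sum>j<N. rank S N m (v @ [j]))"
    using \<open>i < N\<close> by (intro member_le_sum) simp_all
  with bad_rank[OF n] show "v @ [i] \<in> bad S N m (\<Sum>j<N. rank S N m (v @ [j]))"
    using bad_mono by blast
qed

text \<open>A never-bad vertex has at least N - m + 1 never-bad children: at the common level
  of its eventually bad children fewer than m children are bad, since v is not bad one
  level later.\<close>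

lemma never_bad_children:
  assumes "1 \<le> m" "m \<le> N" and v: "\<forall>n. v \<notin> bad S N m n"
  shows "N - m + 1 \<le> card {i. i < N \<and> (\<forall>n. v @ [i] \<notin> bad S N m n)}"
proof -
  obtain n0 where n0: "\<forall>i<N. (\<exists>n. v @ [i] \<in> bad S N m n) \<longrightarrow> v @ [i] \<in> bad S N m n0"
    using common_bad_level by blast
  define A where "A = {i. i < N \<and> v @ [i] \<in> bad S N m n0}"
  have "v \<notin> bad S N m (Suc n0)" using v by blast
  then have "card A < m" unfolding A_def by simp
  have "{i. i < N \<and> (\<forall>n. v @ [i] \<notin> bad S N m n)} = {..<N} - A"
    using n0 unfolding A_def by blast
  moreover have "card ({..<N} - A) = N - card A"
    by (subst card_Diff_subset) (auto simp: A_def)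
  ultimately show ?thesis using assms(1,2) \<open>card A < m\<close> by simp
qed

text \<open>A bad root yields an m-regular subtree of the full tree meeting S finitely often:
  along its branches inside S the rank drops at every step.\<close>

lemma bad_root:
  assumes S: "is_subtree S (full_tree N)" and "m \<le> N" and root: "[] \<in> bad S N m r"
  shows "\<exists>R. is_subtree R (full_tree N) \<and> regular m R \<and> finite (S \<inter> R)"
proof -
  let ?rk = "rank S N m"
  define P where "P v \<longleftrightarrow> v \<in> S \<longrightarrow> (\<exists>n. v \<in> bad S N m n) \<and> ?rk v + length v \<le> ?rk []"
    for v
  have "m \<le> card {i. i < N \<and> P (v @ [i])}" if Pv: "P v" for v
  proof (cases "v \<in> S")
    case False
    then have "v @ [i] \<notin> S" for i
      using S unfolding is_subtree_def by (metis butlast_snoc)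
    then have "{i. i < N \<and> P (v @ [i])} = {..<N}" unfolding P_def by auto
    then show ?thesis using \<open>m \<le> N\<close> by simp
  next
    case True
    with Pv obtain n where n: "v \<in> bad S N m n" and len: "?rk v + length v \<le> ?rk []"
      unfolding P_def by blast
    let ?A = "{i. i < N \<and> v @ [i] \<in> bad S N m (?rk v - 1)}"
    have A: "0 < ?rk v" "m \<le> card ?A" using bad_vertex_in_S[OF True n] by auto
    have "?A \<subseteq> {i. i < N \<and> P (v @ [i])}"
    proof safe
      fix i assume "i < N" and child: "v @ [i] \<in> bad S N m (?rk v - 1)"
      have "?rk (v @ [i]) \<le> ?rk v - 1" using child by (rule rank_le)
      with A len have "?rk (v @ [i]) + length (v @ [i]) \<le> ?rk []" by (simp del: bad.simps)
      with child show "P (v @ [i])" unfolding P_def by blast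
    qed
    then have "card ?A \<le> card {i. i < N \<and> P (v @ [i])}" by (intro card_mono) simp_all
    with A(2) show ?thesis by linarith
  qed
  moreover have "P []" using root unfolding P_def by (simp del: bad.simps) blast
  ultimately obtain R where R: "is_subtree R (full_tree N)" "regular m R" "\<forall>v\<in>R. P v"
    using branching_subtree[of P m N] by blast
  have "S \<inter> R \<subseteq> {xs. set xs \<subseteq> {..<N} \<and> length xs \<le> ?rk []}"
  proof
    fix xs assume xs: "xs \<in> S \<inter> R"
    then have "xs \<in> full_tree N" using R(1) unfolding is_subtree_def by blast
    moreover have "length xs \<le> ?rk []" using xs R(3) unfolding P_def by fastforce
    ultimately show "xs \<in> {xs. set xs \<subseteq> {..<N} \<and> length xs \<le> ?rk []}"
      unfolding full_tree_def by auto
  qed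
  then have "finite (S \<inter> R)"
    by (rule finite_subset) (rule finite_lists_length_le, simp)
  with R show ?thesis by blast
qed

text \<open>A never-bad root yields an (N - m + 1)-regular subtree of S consisting of
  never-bad vertices (which lie in S, as vertices outside S are bad at level 0).\<close>

lemma good_root:
  assumes "1 \<le> m" "m \<le> N" and root: "\<forall>n. [] \<notin> bad S N m n"
  shows "\<exists>R. is_subtree R S \<and> regular (N - m + 1) R"
proof -
  obtain R where R: "is_subtree R (full_tree N)" "regular (N - m + 1) R"
      "\<forall>v\<in>R. \<forall>n. v \<notin> bad S N m n"
    using branching_subtree[where P = "\<lambda>v. \<forall>n. v \<notin> bad S N m n"]
      never_bad_children[OF assms(1,2)] root by blast
  have "R \<subseteq> S"
  proof
    fix v assume "v \<in> R"
    then have "v \<notin> bad S N m 0" using R(3) by blast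
    then show "v \<in> S" by simp
  qed
  with R(1,2) show ?thesis unfolding is_subtree_def by blast
qed

theorem proposition2p1:
  fixes N m :: nat and S :: "nat list set"
  assumes "is_subtree S (full_tree N)"
    and "1 \<le> m" and "m \<le> N"
    and "\<forall>R. is_subtree R (full_tree N) \<and> regular m R \<longrightarrow> infinite (S \<inter> R)"
  shows "\<exists>R'. is_subtree R' S \<and> regular (N - m + 1) R'"
proof (cases "\<exists>r. [] \<in> bad S N m r")
  case True
  then obtain r where "[] \<in> bad S N m r" by blast
  with bad_root[OF assms(1,3)] assms(4) show ?thesis by blast
next
  case False
  then show ?thesis using good_root[OF assms(2,3)] by blast
qed

end
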